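(* Let $(M^n,g)$, $n\ge3$, be a Riemannian manifold, $f,V\in C^\infty(M)$, $\widetilde g=e^{-\frac2{n-1}f}g$ and $u=e^{-\frac{f}{n-1}}V$. Then $$\widetilde\Delta u=e^{-\frac f{n-1}}\Big(\tfrac12F^*_f(V)+\tfrac12VS_f\Big),\qquad \widetilde\nabla^2u-u\,\widetilde{\mathrm{Ric}}=e^{\frac f{n-1}}\Big(F^*_g(V)+\tfrac12F^*_f(V)\,g\Big),$$ where $\widetilde\Delta,\widetilde\nabla^2,\widetilde{\mathrm{Ric}}$ are the Laplacian, Hessian and Ricci tensor of $\widetilde g$, and $$F^*_g(V)_{ij}=\nabla_i\nabla_jV-(\Delta V)g_{ij}+\langle\nabla V,\nabla f\rangle g_{ij}-V\Big(\mathrm{Ric}_{ij}+\nabla_i\nabla_jf+\tfrac1{n-1}\nabla_if\nabla_jf\Big)+\tfrac12VS_fg_{ij},$$ $$F^*_f(V)=2\Delta V-\tfrac{2n}{n-1}\langle\nabla V,\nabla f\rangle-\tfrac2{n-1}V\Delta f+\tfrac2{n-1}V|\nabla f|^2-VS_f.$$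
   Context: All quantities without tilde are computed with respect to $g$; $\Delta=\nabla_i\nabla^i$; $S_f=R+2\Delta f-\frac{n-2}{n-1}|\nabla f|^2$ with $R$ the scalar curvature of $g$. *)

theory Defs
  imports "HOL-Analysis.Analysis"
begin

text \<open>Local-coordinate rendering of Riemannian geometry on an open set U of R^n.
  Points are vectors of type real^'n; a metric is a matrix field g.\<close>

definition pd :: "'n::finite \<Rightarrow> (real^'n \<Rightarrow> real) \<Rightarrow> real^'n \<Rightarrow> real" where
  "pd i F x = deriv (\<lambda>t. F (x + t *\<^sub>R axis i 1)) 0"

primrec ipd :: "'n::finite list \<Rightarrow> (real^'n \<Rightarrow> real) \<Rightarrow> real^'n \<Rightarrow> real" where
  "ipd [] F = F"
| "ipd (i # is) F = pd i (ipd is F)"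

definition smooth_on :: "(real^'n::finite) set \<Rightarrow> (real^'n \<Rightarrow> real) \<Rightarrow> bool" where
  "smooth_on U F \<longleftrightarrow> (\<forall>is. \<forall>x\<in>U. ipd is F differentiable (at x))"

definition riem_metric_on :: "(real^'n::finite) set \<Rightarrow> (real^'n \<Rightarrow> real^'n^'n) \<Rightarrow> bool" where
  "riem_metric_on U g \<longleftrightarrow>
     (\<forall>i j. smooth_on U (\<lambda>x. g x $ i $ j)) \<and>
     (\<forall>x\<in>U. \<forall>i j. g x $ i $ j = g x $ j $ i) \<and>
     (\<forall>x\<in>U. \<forall>v. v \<noteq> 0 \<longrightarrow> v \<bullet> (g x *v v) > 0)"

definition ginv :: "(real^'n::finite \<Rightarrow> real^'n^'n) \<Rightarrow> real^'n \<Rightarrow> 'n \<Rightarrow> 'n \<Rightarrow> real" where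
  "ginv g x i j = matrix_inv (g x) $ i $ j"

definition christ :: "(real^'n::finite \<Rightarrow> real^'n^'n) \<Rightarrow> 'n \<Rightarrow> 'n \<Rightarrow> 'n \<Rightarrow> real^'n \<Rightarrow> real" where
  "christ g k i j x = (1/2) * (\<Sum>l\<in>UNIV. ginv g x k l *
      (pd i (\<lambda>y. g y $ j $ l) x + pd j (\<lambda>y. g y $ i $ l) x - pd l (\<lambda>y. g y $ i $ j) x))"

definition ricci :: "(real^'n::finite \<Rightarrow> real^'n^'n) \<Rightarrow> 'n \<Rightarrow> 'n \<Rightarrow> real^'n \<Rightarrow> real" where
  "ricci g i j x =
     (\<Sum>k\<in>UNIV. pd k (christ g k i j) x) - (\<Sum>k\<in>UNIV. pd j (christ g k k i) x)
     + (\<Sum>k\<in>UNIV. \<Sum>l\<in>UNIV. christ g k k l x * christ g l i j x - christ g k j l x * christ g l k i x)"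

definition scal :: "(real^'n::finite \<Rightarrow> real^'n^'n) \<Rightarrow> real^'n \<Rightarrow> real" where
  "scal g x = (\<Sum>i\<in>UNIV. \<Sum>j\<in>UNIV. ginv g x i j * ricci g i j x)"

definition hess :: "(real^'n::finite \<Rightarrow> real^'n^'n) \<Rightarrow> (real^'n \<Rightarrow> real) \<Rightarrow> 'n \<Rightarrow> 'n \<Rightarrow> real^'n \<Rightarrow> real" where
  "hess g u i j x = pd i (pd j u) x - (\<Sum>k\<in>UNIV. christ g k i j x * pd k u x)"

definition lap :: "(real^'n::finite \<Rightarrow> real^'n^'n) \<Rightarrow> (real^'n \<Rightarrow> real) \<Rightarrow> real^'n \<Rightarrow> real" where
  "lap g u x = (\<Sum>i\<in>UNIV. \<Sum>j\<in>UNIV. ginv g x i j * hess g u i j x)"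

definition gip :: "(real^'n::finite \<Rightarrow> real^'n^'n) \<Rightarrow> (real^'n \<Rightarrow> real) \<Rightarrow> (real^'n \<Rightarrow> real) \<Rightarrow> real^'n \<Rightarrow> real" where
  "gip g a b x = (\<Sum>i\<in>UNIV. \<Sum>j\<in>UNIV. ginv g x i j * pd i a x * pd j b x)"

definition Sf :: "(real^'n::finite \<Rightarrow> real^'n^'n) \<Rightarrow> (real^'n \<Rightarrow> real) \<Rightarrow> real^'n \<Rightarrow> real" where
  "Sf g f x = scal g x + 2 * lap g f x
      - (real CARD('n) - 2) / (real CARD('n) - 1) * gip g f f x"

definition Fstar_g :: "(real^'n::finite \<Rightarrow> real^'n^'n) \<Rightarrow> (real^'n \<Rightarrow> real) \<Rightarrow> (real^'n \<Rightarrow> real)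
    \<Rightarrow> 'n \<Rightarrow> 'n \<Rightarrow> real^'n \<Rightarrow> real" where
  "Fstar_g g f V i j x =
     hess g V i j x - lap g V x * g x $ i $ j + gip g V f x * g x $ i $ j
     - V x * (ricci g i j x + hess g f i j x + 1 / (real CARD('n) - 1) * pd i f x * pd j f x)
     + (1/2) * V x * Sf g f x * g x $ i $ j"

definition Fstar_f :: "(real^'n::finite \<Rightarrow> real^'n^'n) \<Rightarrow> (real^'n \<Rightarrow> real) \<Rightarrow> (real^'n \<Rightarrow> real)
    \<Rightarrow> real^'n \<Rightarrow> real" where
  "Fstar_f g f V x =
     2 * lap g V x - 2 * real CARD('n) / (real CARD('n) - 1) * gip g V f x
     - 2 / (real CARD('n) - 1) * V x * lap g f x
     + 2 / (real CARD('n) - 1) * V x * gip g f f x - V x * Sf g f x"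

end

theory Submission
  imports Defs
begin

text \<open>With \<open>\<phi> = -f/(n-1)\<close> one has \<open>gt = e\<^sup>2\<^sup>\<phi> g\<close> and \<open>u = e\<^sup>\<phi> V\<close>, so everything follows
  from the transformation laws under a conformal change. The Christoffel symbols of \<open>e\<^sup>2\<^sup>\<phi> g\<close>
  exceed those of \<open>g\<close> by \<open>D\<^sup>k\<^sub>i\<^sub>j = \<delta>\<^sup>k\<^sub>j \<phi>\<^sub>i + \<delta>\<^sup>k\<^sub>i \<phi>\<^sub>j - g\<^sub>i\<^sub>j \<nabla>\<^sup>k\<phi>\<close>. This gives the laws for the
  Hessian and the Laplacian directly, and expanding the Ricci tensor in \<open>\<Gamma> + D\<close> gives
  \<open>Ric\<^sub>g\<^sub>t = Ric - (n-2)(\<nabla>\<^sup>2\<phi> - d\<phi> \<otimes> d\<phi>) - (\<Delta>\<phi> + (n-2)|\<nabla>\<phi>|\<^sup>2) g\<close>: the first derivatives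
  of \<open>g\<close> cancel by \<open>\<nabla>g = 0\<close>, and the second derivatives of \<open>\<phi>\<close> combine by the symmetry of
  mixed partials and the divergence form \<open>\<Delta>\<phi> = div \<nabla>\<phi>\<close>. After the product rule for
  \<open>e\<^sup>\<phi> V\<close>, what remains is a comparison of coefficients.\<close>

lemma if_zero_mult [simp]:
  fixes a b :: real
  shows "(if c then a else 0) * b = (if c then a * b else 0)"
    and "b * (if c then a else 0) = (if c then b * a else 0)"
  by simp_all

lemma sum_rotate3: "(\<Sum>i\<in>A. \<Sum>j\<in>B. \<Sum>k\<in>C. f i j k) = (\<Sum>j\<in>B. \<Sum>k\<in>C. \<Sum>i\<in>A. f i j k)"
  by (subst sum.swap) (rule sum.cong[OF refl], rule sum.swap)

section \<open>Partial derivatives\<close>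

lemma has_real_derivative_along_line:
  fixes F :: "real^'n::finite \<Rightarrow> real"
  assumes "(F has_derivative F') (at (p + s *\<^sub>R v))"
  shows "((\<lambda>t. F (p + t *\<^sub>R v)) has_real_derivative F' v) (at s)"
proof -
  have "((\<lambda>t. p + t *\<^sub>R v) has_derivative (\<lambda>h. h *\<^sub>R v)) (at s)"
    by (auto intro!: derivative_eq_intros)
  from has_derivative_compose[OF this assms]
  have "((\<lambda>t. F (p + t *\<^sub>R v)) has_derivative (\<lambda>h. F' (h *\<^sub>R v))) (at s)" by simp
  moreover have "(\<lambda>h. F' (h *\<^sub>R v)) = (\<lambda>h. F' v * h)"
    using has_derivative_linear[OF assms] by (auto simp: linear_scale)
  ultimately show ?thesis by (simp add: has_field_derivative_def)
qed

lemma pd_has_real_derivative: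
  fixes F :: "real^'n::finite \<Rightarrow> real"
  assumes "F differentiable (at (p + s *\<^sub>R axis i 1))"
  shows "((\<lambda>t. F (p + t *\<^sub>R axis i 1)) has_real_derivative pd i F (p + s *\<^sub>R axis i 1)) (at s)"
proof -
  obtain F' where F': "(F has_derivative F') (at (p + s *\<^sub>R axis i 1))"
    using assms differentiable_def by blast
  have "pd i F (p + s *\<^sub>R axis i 1) = F' (axis i 1)"
    unfolding pd_def using has_real_derivative_along_line[of F F' "p + s *\<^sub>R axis i 1" 0] F'
    by (simp add: DERIV_imp_deriv)
  with has_real_derivative_along_line[OF F'] show ?thesis by simp
qed

lemma pd_has_real_derivative_0:
  fixes F :: "real^'n::finite \<Rightarrow> real"
  assumes "F differentiable (at x)"
  shows "((\<lambda>t. F (x + t *\<^sub>R axis i 1)) has_real_derivative pd i F x) (at 0)"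
  using pd_has_real_derivative[of F x 0 i] assms by simp

lemma pd_const: "pd i (\<lambda>y. c) x = 0"
  unfolding pd_def by simp

lemma pd_add:
  fixes F G :: "real^'n::finite \<Rightarrow> real"
  assumes "F differentiable (at x)" "G differentiable (at x)"
  shows "pd i (\<lambda>y. F y + G y) x = pd i F x + pd i G x"
  unfolding pd_def[of i "\<lambda>y. F y + G y"]
  by (rule DERIV_imp_deriv, rule DERIV_add; rule pd_has_real_derivative_0, fact)

lemma pd_diff:
  fixes F G :: "real^'n::finite \<Rightarrow> real"
  assumes "F differentiable (at x)" "G differentiable (at x)"
  shows "pd i (\<lambda>y. F y - G y) x = pd i F x - pd i G x"
  unfolding pd_def[of i "\<lambda>y. F y - G y"]
  by (rule DERIV_imp_deriv, rule DERIV_diff; rule pd_has_real_derivative_0, fact)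

lemma pd_mult:
  fixes F G :: "real^'n::finite \<Rightarrow> real"
  assumes "F differentiable (at x)" "G differentiable (at x)"
  shows "pd i (\<lambda>y. F y * G y) x = pd i F x * G x + F x * pd i G x"
proof -
  have "((\<lambda>t. F (x + t *\<^sub>R axis i 1) * G (x + t *\<^sub>R axis i 1)) has_real_derivative
     F (x + 0 *\<^sub>R axis i 1) * pd i G x + pd i F x * G (x + 0 *\<^sub>R axis i 1)) (at 0)"
    by (rule DERIV_mult'; rule pd_has_real_derivative_0, fact)
  then show ?thesis
    unfolding pd_def[of i "\<lambda>y. F y * G y"] by (simp add: DERIV_imp_deriv add.commute)
qed

lemma pd_cmult:
  fixes F :: "real^'n::finite \<Rightarrow> real"
  assumes "F differentiable (at x)"
  shows "pd i (\<lambda>y. c * F y) x = c * pd i F x"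
  using pd_mult[of "\<lambda>y. c" x F i] assms by (simp add: pd_const)

lemma pd_sum:
  fixes F :: "'a \<Rightarrow> real^'n::finite \<Rightarrow> real"
  assumes "finite S" "\<And>a. a \<in> S \<Longrightarrow> F a differentiable (at x)"
  shows "pd i (\<lambda>y. \<Sum>a\<in>S. F a y) x = (\<Sum>a\<in>S. pd i (F a) x)"
  unfolding pd_def[of i "\<lambda>y. \<Sum>a\<in>S. F a y"]
  by (intro DERIV_imp_deriv DERIV_sum) (use assms pd_has_real_derivative_0 in auto)

lemma pd_exp:
  fixes F :: "real^'n::finite \<Rightarrow> real"
  assumes "F differentiable (at x)"
  shows "pd i (\<lambda>y. exp (F y)) x = exp (F x) * pd i F x"
proof -
  have "((\<lambda>t. exp (F (x + t *\<^sub>R axis i 1))) has_real_derivative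
     exp (F (x + 0 *\<^sub>R axis i 1)) * pd i F x) (at 0)"
    by (rule DERIV_chain2[OF DERIV_exp pd_has_real_derivative_0[OF assms]])
  then show ?thesis
    unfolding pd_def[of i "\<lambda>y. exp (F y)"] by (simp add: DERIV_imp_deriv)
qed

lemma pd_if: "pd i (\<lambda>y. if c then F y else 0) x = (if c then pd i F x else 0)"
  by (cases c) (auto simp: pd_const)

lemma pd_cong:
  fixes F G :: "real^'n::finite \<Rightarrow> real"
  assumes "open S" "x \<in> S" "\<And>y. y \<in> S \<Longrightarrow> F y = G y"
  shows "pd i F x = pd i G x"
proof -
  obtain e where e: "e > 0" "ball x e \<subseteq> S" using assms openE by blast
  have "\<forall>\<^sub>F t in nhds 0. F (x + t *\<^sub>R axis i 1) = G (x + t *\<^sub>R axis i 1)"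
    unfolding eventually_nhds_metric
  proof (intro exI[of _ e] conjI allI impI)
    fix t :: real assume "dist t 0 < e"
    then have "x + t *\<^sub>R axis i 1 \<in> ball x e" by (simp add: dist_norm)
    then show "F (x + t *\<^sub>R axis i 1) = G (x + t *\<^sub>R axis i 1)" using e assms by auto
  qed (use e in auto)
  then show ?thesis unfolding pd_def by (rule deriv_cong_ev) simp
qed

lemma differentiable_transform_open:
  fixes F G :: "real^'n::finite \<Rightarrow> real"
  assumes "open S" "x \<in> S" "\<And>y. y \<in> S \<Longrightarrow> F y = G y" "G differentiable (at x)"
  shows "F differentiable (at x)"
proof -
  obtain G' where "(G has_derivative G') (at x)" using assms differentiable_def by blast
  then have "(F has_derivative G') (at x)"
    by (rule has_derivative_transform_within_open[where s=S]) (use assms in auto)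
  then show ?thesis using differentiable_def by blast
qed

lemma differentiable_exp_comp:
  fixes F :: "real^'n::finite \<Rightarrow> real"
  assumes "F differentiable (at x)"
  shows "(\<lambda>y. exp (F y)) differentiable (at x)"
proof -
  obtain F' where "(F has_derivative F') (at x)" using assms differentiable_def by blast
  from DERIV_compose_FDERIV[OF DERIV_exp this] show ?thesis
    unfolding differentiable_def by blast
qed

lemma differentiable_if_zero:
  fixes F :: "real^'n::finite \<Rightarrow> real"
  shows "F differentiable (at x) \<Longrightarrow> (\<lambda>y. if c then F y else 0) differentiable (at x)"
  by (cases c) auto

lemma smooth_on_differentiable: "smooth_on U F \<Longrightarrow> x \<in> U \<Longrightarrow> F differentiable (at x)"
  unfolding smooth_on_def by (metis ipd.simps(1))

lemma smooth_on_pd_differentiable: "smooth_on U F \<Longrightarrow> x \<in> U \<Longrightarrow> pd i F differentiable (at x)"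
  unfolding smooth_on_def by (metis ipd.simps)

lemma smooth_on_cmult:
  fixes F :: "real^'n::finite \<Rightarrow> real"
  assumes U: "open U" and F: "smooth_on U F"
  shows "smooth_on U (\<lambda>y. c * F y)"
proof -
  have ipd_cmult: "\<forall>y\<in>U. ipd is (\<lambda>y. c * F y) y = c * ipd is F y" for "is"
  proof (induction "is")
    case (Cons i "is")
    show ?case
    proof
      fix y assume y: "y \<in> U"
      have "ipd (i # is) (\<lambda>y. c * F y) y = pd i (\<lambda>z. c * ipd is F z) y"
        using pd_cong[OF U y, of "ipd is (\<lambda>y. c * F y)" "\<lambda>z. c * ipd is F z" i] Cons by simp
      also have "\<dots> = c * pd i (ipd is F) y"
        by (rule pd_cmult) (use F y in \<open>simp add: smooth_on_def\<close>)
      finally show "ipd (i # is) (\<lambda>y. c * F y) y = c * ipd (i # is) F y" by simp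
    qed
  qed simp
  show ?thesis unfolding smooth_on_def
  proof (intro allI ballI)
    fix "is" y assume y: "y \<in> U"
    show "ipd is (\<lambda>y. c * F y) differentiable (at y)"
      by (rule differentiable_transform_open[OF U y, of _ "\<lambda>z. c * ipd is F z"])
         (use ipd_cmult F y in \<open>auto simp: smooth_on_def\<close>)
  qed
qed

lemma mixed_difference_mean_value:
  fixes F :: "real^'n::finite \<Rightarrow> real"
  assumes F: "smooth_on U F" and h: "h > 0"
    and rect: "\<And>s t. 0 \<le> s \<Longrightarrow> s \<le> h \<Longrightarrow> 0 \<le> t \<Longrightarrow> t \<le> h \<Longrightarrow>
        x + s *\<^sub>R axis i 1 + t *\<^sub>R axis j 1 \<in> U"
  obtains s t where "0 < s" "s < h" "0 < t" "t < h"
    "F (x + h *\<^sub>R axis i 1 + h *\<^sub>R axis j 1) - F (x + h *\<^sub>R axis i 1) - F (x + h *\<^sub>R axis j 1) + F x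
     = h * h * pd j (pd i F) (x + s *\<^sub>R axis i 1 + t *\<^sub>R axis j 1)"
proof -
  let ?a = "axis i 1 :: real^'n" and ?b = "axis j 1 :: real^'n"
  define f1 where "f1 s = F ((x + h *\<^sub>R ?b) + s *\<^sub>R ?a) - F (x + s *\<^sub>R ?a)" for s
  have "DERIV f1 s :> pd i F ((x + h *\<^sub>R ?b) + s *\<^sub>R ?a) - pd i F (x + s *\<^sub>R ?a)"
    if "0 \<le> s" "s \<le> h" for s
  proof -
    have "(x + h *\<^sub>R ?b) + s *\<^sub>R ?a \<in> U" "x + s *\<^sub>R ?a \<in> U"
      using rect[OF that, of h] rect[OF that, of 0] h by (simp_all add: add_ac)
    then show ?thesis
      unfolding f1_def
      by (intro DERIV_diff pd_has_real_derivative smooth_on_differentiable[OF F])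
  qed
  from MVT2[OF h this] obtain s where s: "0 < s" "s < h"
    and f1: "f1 h - f1 0 = h * (pd i F ((x + h *\<^sub>R ?b) + s *\<^sub>R ?a) - pd i F (x + s *\<^sub>R ?a))"
    by auto
  define f2 where "f2 t = pd i F ((x + s *\<^sub>R ?a) + t *\<^sub>R ?b)" for t
  have "DERIV f2 t :> pd j (pd i F) ((x + s *\<^sub>R ?a) + t *\<^sub>R ?b)" if "0 \<le> t" "t \<le> h" for t
    unfolding f2_def using rect[of s t] s that
    by (intro pd_has_real_derivative smooth_on_pd_differentiable[OF F]) simp
  from MVT2[OF h this] obtain t where t: "0 < t" "t < h"
    and f2: "f2 h - f2 0 = h * pd j (pd i F) ((x + s *\<^sub>R ?a) + t *\<^sub>R ?b)"
    by auto
  have "F (x + h *\<^sub>R ?a + h *\<^sub>R ?b) - F (x + h *\<^sub>R ?a) - F (x + h *\<^sub>R ?b) + F x = f1 h - f1 0"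
    unfolding f1_def by (simp add: add_ac)
  also have "\<dots> = h * (f2 h - f2 0)"
    using f1 unfolding f2_def by (simp add: add_ac)
  also have "\<dots> = h * h * pd j (pd i F) (x + s *\<^sub>R ?a + t *\<^sub>R ?b)"
    using f2 by simp
  finally show ?thesis using s t that by blast
qed

lemma mixed_difference_quotient_approx:
  fixes F :: "real^'n::finite \<Rightarrow> real"
  assumes U: "open U" and x: "x \<in> U" and F: "smooth_on U F" and e: "e > 0"
  obtains d where "d > 0"
    "\<And>h. 0 < h \<Longrightarrow> h < d \<Longrightarrow>
      \<bar>(F (x + h *\<^sub>R axis i 1 + h *\<^sub>R axis j 1) - F (x + h *\<^sub>R axis i 1) - F (x + h *\<^sub>R axis j 1) + F x)
        / (h * h) - pd j (pd i F) x\<bar> < e"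
proof -
  have "continuous (at x) (pd j (pd i F))"
    using F x unfolding smooth_on_def by (metis ipd.simps differentiable_imp_continuous_within)
  then obtain d1 where d1: "d1 > 0" "\<And>y. dist y x < d1 \<Longrightarrow> \<bar>pd j (pd i F) y - pd j (pd i F) x\<bar> < e"
    using e unfolding continuous_within_eps_delta dist_real_def by (metis UNIV_I)
  obtain d0 where d0: "d0 > 0" "ball x d0 \<subseteq> U" using U x openE by blast
  have "\<bar>(F (x + h *\<^sub>R axis i 1 + h *\<^sub>R axis j 1) - F (x + h *\<^sub>R axis i 1) - F (x + h *\<^sub>R axis j 1) + F x)
      / (h * h) - pd j (pd i F) x\<bar> < e" if h: "0 < h" "h < min d0 d1 / 2" for h
  proof -
    have near: "dist (x + s *\<^sub>R axis i 1 + t *\<^sub>R axis j 1) x < min d0 d1"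
      if "0 \<le> s" "s \<le> h" "0 \<le> t" "t \<le> h" for s t
    proof -
      have "dist (x + s *\<^sub>R axis i 1 + t *\<^sub>R axis j 1) x = norm (s *\<^sub>R axis i (1::real) + t *\<^sub>R axis j 1)"
        by (simp add: dist_norm)
      also have "\<dots> \<le> norm (s *\<^sub>R axis i (1::real)) + norm (t *\<^sub>R axis j (1::real))"
        by (rule norm_triangle_ineq)
      also have "\<dots> = s + t" using that by simp
      finally show ?thesis using that h by linarith
    qed
    have "x + s *\<^sub>R axis i 1 + t *\<^sub>R axis j 1 \<in> U" if "0 \<le> s" "s \<le> h" "0 \<le> t" "t \<le> h" for s t
      using near[OF that] d0 by (auto simp: dist_commute)
    then obtain s t where "0 < s" "s < h" "0 < t" "t < h"
      and "F (x + h *\<^sub>R axis i 1 + h *\<^sub>R axis j 1) - F (x + h *\<^sub>R axis i 1) - F (x + h *\<^sub>R axis j 1) + F x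
        = h * h * pd j (pd i F) (x + s *\<^sub>R axis i 1 + t *\<^sub>R axis j 1)"
      using mixed_difference_mean_value[OF F h(1)] by blast
    with d1(2)[OF less_le_trans[OF near]] h show ?thesis by simp
  qed
  then show ?thesis using that[of "min d0 d1 / 2"] d0 d1 by simp
qed

lemma pd_pd_commute:
  fixes F :: "real^'n::finite \<Rightarrow> real"
  assumes U: "open U" and x: "x \<in> U" and F: "smooth_on U F"
  shows "pd i (pd j F) x = pd j (pd i F) x"
proof (rule ccontr)
  let ?A = "pd j (pd i F) x" and ?B = "pd i (pd j F) x"
  let ?\<Delta> = "\<lambda>h. (F (x + h *\<^sub>R axis i 1 + h *\<^sub>R axis j 1) - F (x + h *\<^sub>R axis i 1)
    - F (x + h *\<^sub>R axis j 1) + F x) / (h * h)"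
  assume "?B \<noteq> ?A"
  then have e: "\<bar>?A - ?B\<bar> / 2 > 0" by simp
  obtain d1 where d1: "d1 > 0" "\<And>h. 0 < h \<Longrightarrow> h < d1 \<Longrightarrow> \<bar>?\<Delta> h - ?A\<bar> < \<bar>?A - ?B\<bar> / 2"
    using mixed_difference_quotient_approx[OF U x F e, of i j] by blast
  have swap: "F (x + h *\<^sub>R axis j 1 + h *\<^sub>R axis i 1) - F (x + h *\<^sub>R axis j 1) - F (x + h *\<^sub>R axis i 1) + F x
      = F (x + h *\<^sub>R axis i 1 + h *\<^sub>R axis j 1) - F (x + h *\<^sub>R axis i 1) - F (x + h *\<^sub>R axis j 1) + F x" for h
    by (simp add: add_ac)
  obtain d2 where d2: "d2 > 0" "\<And>h. 0 < h \<Longrightarrow> h < d2 \<Longrightarrow> \<bar>?\<Delta> h - ?B\<bar> < \<bar>?A - ?B\<bar> / 2"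
    using mixed_difference_quotient_approx[OF U x F e, of j i, unfolded swap] by blast
  define h where "h = min d1 d2 / 2"
  have "0 < h" "h < d1" "h < d2" using d1(1) d2(1) by (auto simp: h_def)
  then have "\<bar>?\<Delta> h - ?A\<bar> < \<bar>?A - ?B\<bar> / 2" "\<bar>?\<Delta> h - ?B\<bar> < \<bar>?A - ?B\<bar> / 2"
    using d1(2) d2(2) by blast+
  moreover have "\<not> (\<bar>a - p\<bar> < \<bar>p - q\<bar> / 2 \<and> \<bar>a - q\<bar> < \<bar>p - q\<bar> / 2)" for a p q :: real
    by (auto simp: abs_if split: if_splits)
  ultimately show False by blast
qed

section \<open>Matrices\<close>

lemma
  fixes A :: "real^'n::finite^'n"
  assumes "invertible A"
  shows matrix_inv_right: "A ** matrix_inv A = mat 1"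
    and matrix_inv_left: "matrix_inv A ** A = mat 1"
proof -
  have "\<exists>A'. A ** A' = mat 1 \<and> A' ** A = mat 1" using assms invertible_def by blast
  then have "A ** matrix_inv A = mat 1 \<and> matrix_inv A ** A = mat 1"
    unfolding matrix_inv_def by (rule someI_ex)
  then show "A ** matrix_inv A = mat 1" "matrix_inv A ** A = mat 1" by auto
qed

lemma matrix_inv_unique:
  fixes A B :: "real^'n::finite^'n"
  assumes "A ** B = mat 1" "B ** A = mat 1"
  shows "matrix_inv A = B"
proof -
  have A: "invertible A" using assms invertible_def by blast
  have "matrix_inv A = matrix_inv A ** (A ** B)" by (simp add: assms)
  also have "\<dots> = (matrix_inv A ** A) ** B" by (simp add: matrix_mul_assoc)
  also have "\<dots> = B" by (simp add: matrix_inv_left[OF A])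
  finally show ?thesis .
qed

lemma matrix_inv_scaleR:
  fixes A :: "real^'n::finite^'n"
  assumes "invertible A" "c \<noteq> 0"
  shows "matrix_inv (c *\<^sub>R A) = inverse c *\<^sub>R matrix_inv A"
  by (rule matrix_inv_unique)
     (simp_all add: scalar_matrix_assoc[symmetric] matrix_scalar_ac
       matrix_inv_right[OF assms(1)] matrix_inv_left[OF assms(1)] assms(2))

lemma matrix_inv_transpose:
  fixes A :: "real^'n::finite^'n"
  assumes "invertible A"
  shows "matrix_inv (transpose A) = transpose (matrix_inv A)"
  by (rule matrix_inv_unique)
     (simp_all add: matrix_transpose_mul[symmetric] matrix_inv_right[OF assms]
       matrix_inv_left[OF assms] transpose_mat)

lemma positive_definite_invertible:
  fixes A :: "real^'n::finite^'n"
  assumes "\<forall>v. v \<noteq> 0 \<longrightarrow> v \<bullet> (A *v v) > 0"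
  shows "invertible A"
proof -
  have "\<forall>v. A *v v = 0 \<longrightarrow> v = 0"
    using assms by (metis inner_zero_right less_irrefl)
  then show ?thesis
    unfolding invertible_left_inverse matrix_left_invertible_ker .
qed

lemma differentiable_det:
  fixes M :: "real^'n::finite \<Rightarrow> real^'m::finite^'m"
  assumes "\<And>a b. (\<lambda>y. M y $ a $ b) differentiable (at x)"
  shows "(\<lambda>y. det (M y)) differentiable (at x)"
proof -
  have prod: "(\<lambda>y. \<Prod>a\<in>S. F a y) differentiable (at x)"
    if "\<And>a. F a differentiable (at x)" for S and F :: "'m \<Rightarrow> real^'n \<Rightarrow> real"
    using that by (induction S rule: infinite_finite_induct) auto
  show ?thesis
    unfolding det_def
    by (intro differentiable_sum differentiable_mult differentiable_const prod ballI assms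
        finite_permutations finite)
qed

section \<open>Riemannian metrics in a chart\<close>

lemma hess_cmult:
  fixes F :: "real^'n::finite \<Rightarrow> real"
  assumes U: "open U" and F: "smooth_on U F" and x: "x \<in> U"
  shows "hess g (\<lambda>y. c * F y) i j x = c * hess g F i j x"
proof -
  have "pd i (pd j (\<lambda>y. c * F y)) x = pd i (\<lambda>y. c * pd j F y) x"
    by (rule pd_cong[OF U x], rule pd_cmult, rule smooth_on_differentiable[OF F])
  also have "\<dots> = c * pd i (pd j F) x"
    by (rule pd_cmult, rule smooth_on_pd_differentiable[OF F x])
  finally show ?thesis
    unfolding hess_def pd_cmult[OF smooth_on_differentiable[OF F x]]
    by (simp add: sum_distrib_left algebra_simps)
qed

lemma lap_cmult:
  fixes F :: "real^'n::finite \<Rightarrow> real"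
  assumes "open U" "smooth_on U F" "x \<in> U"
  shows "lap g (\<lambda>y. c * F y) x = c * lap g F x"
  unfolding lap_def hess_cmult[OF assms] by (simp add: sum_distrib_left algebra_simps)

lemma gip_cmult:
  fixes F :: "real^'n::finite \<Rightarrow> real"
  assumes F: "smooth_on U F" and x: "x \<in> U"
  shows gip_cmult_left: "gip g (\<lambda>y. c * F y) B x = c * gip g F B x"
    and gip_cmult_right: "gip g A (\<lambda>y. c * F y) x = c * gip g A F x"
  unfolding gip_def pd_cmult[OF smooth_on_differentiable[OF F x]]
  by (simp_all add: sum_distrib_left algebra_simps)

definition grad :: "(real^'n::finite \<Rightarrow> real^'n^'n) \<Rightarrow> (real^'n \<Rightarrow> real) \<Rightarrow> 'n \<Rightarrow> real^'n \<Rightarrow> real" where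
  "grad g u k x = (\<Sum>l\<in>UNIV. ginv g x k l * pd l u x)"

definition christ_trace :: "(real^'n::finite \<Rightarrow> real^'n^'n) \<Rightarrow> 'n \<Rightarrow> real^'n \<Rightarrow> real" where
  "christ_trace g a x = (\<Sum>k\<in>UNIV. christ g k k a x)"

definition christ_pd :: "(real^'n::finite \<Rightarrow> real^'n^'n) \<Rightarrow> (real^'n \<Rightarrow> real) \<Rightarrow> 'n \<Rightarrow> 'n \<Rightarrow> real^'n \<Rightarrow> real" where
  "christ_pd g u i j x = (\<Sum>k\<in>UNIV. christ g k i j x * pd k u x)"

lemma hess_eq_christ_pd: "hess g u i j x = pd i (pd j u) x - christ_pd g u i j x"
  unfolding hess_def christ_pd_def ..

lemma sum_grad_mult_pd: "(\<Sum>k\<in>UNIV. grad g u k x * pd k v x) = gip g v u x"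
  unfolding grad_def gip_def by (simp add: sum_distrib_right sum_distrib_left algebra_simps)

locale riemannian_chart =
  fixes U :: "(real^'n::finite) set" and g :: "real^'n \<Rightarrow> real^'n^'n"
  assumes open_U: "open U" and metric: "riem_metric_on U g"
begin

lemma g_sym: "x \<in> U \<Longrightarrow> g x $ i $ j = g x $ j $ i"
  using metric unfolding riem_metric_on_def by blast

lemma invertible_g: "x \<in> U \<Longrightarrow> invertible (g x)"
  using metric positive_definite_invertible unfolding riem_metric_on_def by blast

lemma smooth_g: "smooth_on U (\<lambda>y. g y $ i $ j)"
  using metric unfolding riem_metric_on_def by blast

lemma g_differentiable: "x \<in> U \<Longrightarrow> (\<lambda>y. g y $ i $ j) differentiable (at x)"
  by (rule smooth_on_differentiable[OF smooth_g])

lemma pd_g_differentiable: "x \<in> U \<Longrightarrow> pd l (\<lambda>y. g y $ i $ j) differentiable (at x)"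
  by (rule smooth_on_pd_differentiable[OF smooth_g])

lemma pd_g_sym: "x \<in> U \<Longrightarrow> pd l (\<lambda>y. g y $ i $ j) x = pd l (\<lambda>y. g y $ j $ i) x"
  by (rule pd_cong[OF open_U]) (use g_sym in auto)

lemma ginv_mult_g: "x \<in> U \<Longrightarrow> (\<Sum>k\<in>UNIV. ginv g x i k * g x $ k $ j) = (if i = j then 1 else 0)"
  using matrix_inv_left[OF invertible_g[of x]]
  by (simp add: ginv_def vec_eq_iff matrix_matrix_mult_def mat_def)

lemma g_mult_ginv: "x \<in> U \<Longrightarrow> (\<Sum>k\<in>UNIV. g x $ i $ k * ginv g x k j) = (if i = j then 1 else 0)"
  using matrix_inv_right[OF invertible_g[of x]]
  by (simp add: ginv_def vec_eq_iff matrix_matrix_mult_def mat_def)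

lemma ginv_sym: "x \<in> U \<Longrightarrow> ginv g x i j = ginv g x j i"
proof -
  assume x: "x \<in> U"
  have "transpose (g x) = g x"
    using g_sym[OF x] by (simp add: vec_eq_iff transpose_def)
  then have inv: "matrix_inv (g x) = transpose (matrix_inv (g x))"
    using matrix_inv_transpose[OF invertible_g[OF x]] by simp
  have "ginv g x i j = transpose (matrix_inv (g x)) $ i $ j"
    unfolding ginv_def by (subst inv) (rule refl)
  also have "\<dots> = ginv g x j i"
    by (simp add: transpose_def ginv_def)
  finally show ?thesis .
qed

lemma trace_ginv_g: "x \<in> U \<Longrightarrow> (\<Sum>i\<in>UNIV. \<Sum>j\<in>UNIV. ginv g x i j * g x $ i $ j) = real CARD('n)"
  using ginv_mult_g[of x] g_sym[of x] by simp

lemma g_ginv_contract: "x \<in> U \<Longrightarrow> (\<Sum>k\<in>UNIV. g x $ i $ k * (\<Sum>m\<in>UNIV. ginv g x k m * X m)) = X i"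
  by (simp add: sum_distrib_left mult.assoc[symmetric] sum.swap[where A=UNIV]
      sum_distrib_right[symmetric] g_mult_ginv)

lemma ginv_g_contract: "x \<in> U \<Longrightarrow> (\<Sum>k\<in>UNIV. ginv g x i k * (\<Sum>m\<in>UNIV. g x $ k $ m * X m)) = X i"
  by (simp add: sum_distrib_left mult.assoc[symmetric] sum.swap[where A=UNIV]
      sum_distrib_right[symmetric] ginv_mult_g)

lemma gip_sym: "x \<in> U \<Longrightarrow> gip g a b x = gip g b a x"
  unfolding gip_def by (subst sum.swap) (simp add: ginv_sym algebra_simps)

lemma g_mult_grad: "x \<in> U \<Longrightarrow> (\<Sum>k\<in>UNIV. g x $ i $ k * grad g u k x) = pd i u x"
  unfolding grad_def by (rule g_ginv_contract)

text \<open>Cramer's rule exhibits the entries of the inverse metric as quotients of polynomials in the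
  entries of the metric, hence as differentiable functions.\<close>
lemma ginv_cramer:
  assumes x: "x \<in> U"
  shows "ginv g x k l = det (\<chi> a b. if b = k then (if a = l then 1 else 0) else g x $ a $ b) / det (g x)"
proof -
  have d: "det (g x) \<noteq> 0" using invertible_g[OF x] invertible_det_nz by blast
  have "g x *v (matrix_inv (g x) *v axis l 1) = axis l 1"
    by (simp add: matrix_vector_mul_assoc matrix_inv_right[OF invertible_g[OF x]])
  then have "(matrix_inv (g x) *v axis l 1) $ k =
     det (\<chi> i j. if j = k then axis l 1 $ i else g x $ i $ j) / det (g x)"
    using cramer[OF d] by simp
  moreover have "(matrix_inv (g x) *v axis l 1) $ k = ginv g x k l"
    by (simp add: matrix_vector_mult_def axis_def ginv_def if_distrib cong: if_cong)
  moreover have "(\<chi> i j. if j = k then axis l 1 $ i else g x $ i $ j)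
      = (\<chi> a b. if b = k then (if a = l then 1 else 0) else g x $ a $ b)"
    by (simp add: axis_def vec_eq_iff)
  ultimately show ?thesis by simp
qed

lemma ginv_differentiable: "x \<in> U \<Longrightarrow> (\<lambda>y. ginv g y k l) differentiable (at x)"
proof (rule differentiable_transform_open[OF open_U])
  assume x: "x \<in> U"
  show "(\<lambda>y. det (\<chi> a b. if b = k then (if a = l then 1 else 0) else g y $ a $ b) / det (g y))
      differentiable (at x)"
  proof (intro differentiable_divide differentiable_det)
    fix a b
    show "(\<lambda>y. (\<chi> a b. if b = k then (if a = l then 1 else 0) else g y $ a $ b) $ a $ b)
        differentiable (at x)"
      by (cases "b = k") (auto intro: g_differentiable[OF x])
  qed (use invertible_g[OF x] invertible_det_nz g_differentiable[OF x] in auto)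
qed (use ginv_cramer in auto)

lemma christ_differentiable: "x \<in> U \<Longrightarrow> christ g k i j differentiable (at x)"
proof -
  assume x: "x \<in> U"
  have christ_eq: "christ g k i j = (\<lambda>x. (1/2) * (\<Sum>l\<in>UNIV. ginv g x k l *
      (pd i (\<lambda>y. g y $ j $ l) x + pd j (\<lambda>y. g y $ i $ l) x - pd l (\<lambda>y. g y $ i $ j) x)))"
    by (simp add: christ_def fun_eq_iff)
  show ?thesis
    unfolding christ_eq
    by (intro differentiable_mult differentiable_sum differentiable_const ballI finite
        differentiable_add differentiable_diff ginv_differentiable[OF x] pd_g_differentiable[OF x])
qed

lemma christ_sym: "x \<in> U \<Longrightarrow> christ g k i j x = christ g k j i x"
  unfolding christ_def by (simp add: pd_g_sym[of x l i j for l] algebra_simps)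

lemma grad_differentiable:
  "smooth_on U u \<Longrightarrow> x \<in> U \<Longrightarrow> grad g u k differentiable (at x)"
  unfolding grad_def[abs_def]
  by (intro differentiable_sum differentiable_mult ballI finite ginv_differentiable
      smooth_on_pd_differentiable)

text \<open>Differentiate \<open>g g\<^sup>-\<^sup>1 = 1\<close>.\<close>
lemma pd_ginv:
  assumes x: "x \<in> U"
  shows "pd c (\<lambda>y. ginv g y k l) x =
    - (\<Sum>a\<in>UNIV. ginv g x k a * (\<Sum>b\<in>UNIV. pd c (\<lambda>y. g y $ a $ b) x * ginv g x b l))"
proof -
  have pd_g_ginv: "(\<Sum>b\<in>UNIV. g x $ a $ b * pd c (\<lambda>y. ginv g y b l) x)
      = - (\<Sum>b\<in>UNIV. pd c (\<lambda>y. g y $ a $ b) x * ginv g x b l)" for a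
  proof -
    have "0 = pd c (\<lambda>y. \<Sum>b\<in>UNIV. g y $ a $ b * ginv g y b l) x"
      using pd_cong[OF open_U x, of "\<lambda>y. \<Sum>b\<in>UNIV. g y $ a $ b * ginv g y b l"
          "\<lambda>y. if a = l then 1 else 0" c]
      by (simp add: g_mult_ginv pd_const)
    also have "\<dots> = (\<Sum>b\<in>UNIV. pd c (\<lambda>y. g y $ a $ b) x * ginv g x b l
        + g x $ a $ b * pd c (\<lambda>y. ginv g y b l) x)"
      using x g_differentiable ginv_differentiable
      by (simp add: pd_sum pd_mult differentiable_mult)
    finally show ?thesis by (simp add: sum.distrib eq_neg_iff_add_eq_0 add.commute)
  qed
  have "pd c (\<lambda>y. ginv g y k l) x
      = (\<Sum>a\<in>UNIV. ginv g x k a * (\<Sum>b\<in>UNIV. g x $ a $ b * pd c (\<lambda>y. ginv g y b l) x))"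
    by (rule ginv_g_contract[OF x, symmetric])
  then show ?thesis by (simp add: pd_g_ginv sum_negf)
qed

lemma christ_trace_eq:
  assumes x: "x \<in> U"
  shows "christ_trace g a x = (1/2) * (\<Sum>k\<in>UNIV. \<Sum>l\<in>UNIV. ginv g x k l * pd a (\<lambda>y. g y $ k $ l) x)"
proof -
  have "(\<Sum>k\<in>UNIV. \<Sum>l\<in>UNIV. ginv g x k l * pd k (\<lambda>y. g y $ a $ l) x)
     = (\<Sum>k\<in>UNIV. \<Sum>l\<in>UNIV. ginv g x k l * pd l (\<lambda>y. g y $ k $ a) x)"
    by (subst sum.swap) (simp add: ginv_sym[OF x, of _ k for k] pd_g_sym[OF x])
  moreover have "christ_trace g a x = (1/2) * ((\<Sum>k\<in>UNIV. \<Sum>l\<in>UNIV. ginv g x k l * pd k (\<lambda>y. g y $ a $ l) x)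
     + (\<Sum>k\<in>UNIV. \<Sum>l\<in>UNIV. ginv g x k l * pd a (\<lambda>y. g y $ k $ l) x)
     - (\<Sum>k\<in>UNIV. \<Sum>l\<in>UNIV. ginv g x k l * pd l (\<lambda>y. g y $ k $ a) x))"
    unfolding christ_trace_def christ_def
    by (simp add: sum_distrib_left[symmetric] sum.distrib sum_subtractf algebra_simps
        sum_divide_distrib[symmetric])
  ultimately show ?thesis by simp
qed

lemma g_mult_christ:
  assumes x: "x \<in> U"
  shows "(\<Sum>k\<in>UNIV. g x $ i $ k * christ g k j l x) =
    (1/2) * (pd j (\<lambda>y. g y $ l $ i) x + pd l (\<lambda>y. g y $ j $ i) x - pd i (\<lambda>y. g y $ j $ l) x)"
proof -
  have "christ g k j l x = (\<Sum>m\<in>UNIV. ginv g x k m *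
     ((1/2) * (pd j (\<lambda>y. g y $ l $ m) x + pd l (\<lambda>y. g y $ j $ m) x - pd m (\<lambda>y. g y $ j $ l) x)))" for k
    unfolding christ_def by (simp add: sum_distrib_left algebra_simps)
  then show ?thesis
    using g_ginv_contract[OF x, of i "\<lambda>m. (1/2) * (pd j (\<lambda>y. g y $ l $ m) x
      + pd l (\<lambda>y. g y $ j $ m) x - pd m (\<lambda>y. g y $ j $ l) x)"]
    by simp
qed

text \<open>The Levi-Civita connection is metric: \<open>\<nabla>g = 0\<close>.\<close>
lemma pd_g_eq_christ:
  assumes x: "x \<in> U"
  shows "pd l (\<lambda>y. g y $ i $ j) x
    = (\<Sum>k\<in>UNIV. g x $ i $ k * christ g k j l x) + (\<Sum>k\<in>UNIV. g x $ j $ k * christ g k i l x)"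
  unfolding g_mult_christ[OF x]
  using pd_g_sym[OF x, of j l i] pd_g_sym[OF x, of l j i] pd_g_sym[OF x, of i j l]
  by (simp add: algebra_simps)

lemma sum_mult_pd_g_eq_christ:
  assumes x: "x \<in> U"
  shows "(\<Sum>l\<in>UNIV. Y l * pd l (\<lambda>y. g y $ i $ j) x)
    = (\<Sum>k\<in>UNIV. g x $ i $ k * (\<Sum>l\<in>UNIV. christ g k j l x * Y l))
      + (\<Sum>l\<in>UNIV. g x $ j $ l * (\<Sum>k\<in>UNIV. christ g l i k x * Y k))"
proof -
  have "(\<Sum>k\<in>UNIV. g x $ i $ k * (\<Sum>l\<in>UNIV. christ g k j l x * Y l))
      = (\<Sum>l\<in>UNIV. \<Sum>k\<in>UNIV. Y l * (g x $ i $ k * christ g k j l x))"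
    unfolding sum_distrib_left by (subst sum.swap) (simp add: mult_ac)
  moreover have "(\<Sum>l\<in>UNIV. g x $ j $ l * (\<Sum>k\<in>UNIV. christ g l i k x * Y k))
      = (\<Sum>l\<in>UNIV. \<Sum>k\<in>UNIV. Y l * (g x $ j $ k * christ g k i l x))"
    unfolding sum_distrib_left by (subst sum.swap) (simp add: mult_ac christ_sym[OF x, of _ i])
  ultimately show ?thesis
    unfolding pd_g_eq_christ[OF x] by (simp add: distrib_left sum_distrib_left sum.distrib)
qed

lemma christ_pd_eq:
  assumes x: "x \<in> U"
  shows "christ_pd g u k l x = (1/2) * (\<Sum>b\<in>UNIV. grad g u b x *
    (pd k (\<lambda>y. g y $ l $ b) x + pd l (\<lambda>y. g y $ k $ b) x - pd b (\<lambda>y. g y $ k $ l) x))"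
proof -
  let ?C = "\<lambda>b. pd k (\<lambda>y. g y $ l $ b) x + pd l (\<lambda>y. g y $ k $ b) x - pd b (\<lambda>y. g y $ k $ l) x"
  have "christ_pd g u k l x = (1/2) * (\<Sum>m\<in>UNIV. \<Sum>b\<in>UNIV. ginv g x m b * ?C b * pd m u x)"
    unfolding christ_pd_def christ_def by (simp add: sum_distrib_left sum_distrib_right algebra_simps)
  also have "\<dots> = (1/2) * (\<Sum>b\<in>UNIV. \<Sum>m\<in>UNIV. ginv g x b m * pd m u x * ?C b)"
    by (subst sum.swap) (simp add: ginv_sym[OF x, of _ b for b] algebra_simps)
  finally show ?thesis
    unfolding grad_def by (simp add: sum_distrib_right)
qed

lemma trace_christ_pd:
  assumes x: "x \<in> U"
  shows "(\<Sum>k\<in>UNIV. \<Sum>l\<in>UNIV. ginv g x k l * christ_pd g u k l x)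
    = (\<Sum>k\<in>UNIV. \<Sum>a\<in>UNIV. ginv g x k a * (\<Sum>b\<in>UNIV. pd k (\<lambda>y. g y $ a $ b) x * grad g u b x))
      - (\<Sum>b\<in>UNIV. christ_trace g b x * grad g u b x)"
proof -
  let ?S = "\<lambda>A. \<Sum>k\<in>UNIV. \<Sum>l\<in>UNIV. ginv g x k l * (\<Sum>b\<in>UNIV. grad g u b x * A k l b)"
  let ?X = "\<Sum>k\<in>UNIV. \<Sum>a\<in>UNIV. ginv g x k a * (\<Sum>b\<in>UNIV. pd k (\<lambda>y. g y $ a $ b) x * grad g u b x)"
  have "(\<Sum>k\<in>UNIV. \<Sum>l\<in>UNIV. ginv g x k l * christ_pd g u k l x)
      = (1/2) * (?S (\<lambda>k l b. pd k (\<lambda>y. g y $ l $ b) x) + ?S (\<lambda>k l b. pd l (\<lambda>y. g y $ k $ b) x)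
                 - ?S (\<lambda>k l b. pd b (\<lambda>y. g y $ k $ l) x))"
    unfolding christ_pd_eq[OF x]
    by (simp add: sum.distrib sum_subtractf sum_distrib_left ring_distribs mult.left_commute)
  moreover have "?S (\<lambda>k l b. pd k (\<lambda>y. g y $ l $ b) x) = ?X"
    by (simp add: mult.commute)
  moreover have "?S (\<lambda>k l b. pd l (\<lambda>y. g y $ k $ b) x) = ?X"
    by (subst sum.swap) (simp add: ginv_sym[OF x, of _ l for l] mult.commute)
  moreover have "?S (\<lambda>k l b. pd b (\<lambda>y. g y $ k $ l) x) = 2 * (\<Sum>b\<in>UNIV. christ_trace g b x * grad g u b x)"
  proof -
    have "?S (\<lambda>k l b. pd b (\<lambda>y. g y $ k $ l) x)
        = (\<Sum>k\<in>UNIV. \<Sum>l\<in>UNIV. \<Sum>b\<in>UNIV. grad g u b x * (ginv g x k l * pd b (\<lambda>y. g y $ k $ l) x))"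
      by (simp add: sum_distrib_left algebra_simps)
    also have "\<dots> = (\<Sum>b\<in>UNIV. \<Sum>k\<in>UNIV. \<Sum>l\<in>UNIV. grad g u b x * (ginv g x k l * pd b (\<lambda>y. g y $ k $ l) x))"
      by (rule sum_rotate3[symmetric])
    finally show ?thesis
      by (simp add: christ_trace_eq[OF x] sum_distrib_left algebra_simps)
  qed
  ultimately show ?thesis by simp
qed

lemma sum_pd_grad:
  assumes u: "smooth_on U u" and x: "x \<in> U"
  shows "(\<Sum>k\<in>UNIV. pd k (grad g u k) x)
    = (\<Sum>k\<in>UNIV. \<Sum>l\<in>UNIV. ginv g x k l * pd k (pd l u) x)
      - (\<Sum>k\<in>UNIV. \<Sum>a\<in>UNIV. ginv g x k a * (\<Sum>b\<in>UNIV. pd k (\<lambda>y. g y $ a $ b) x * grad g u b x))"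
proof -
  have "pd k (grad g u k) x
      = (\<Sum>l\<in>UNIV. pd k (\<lambda>y. ginv g y k l) x * pd l u x + ginv g x k l * pd k (pd l u) x)" for k
    unfolding grad_def[abs_def]
    using x ginv_differentiable smooth_on_pd_differentiable[OF u]
    by (simp add: pd_sum pd_mult differentiable_mult)
  moreover have "(\<Sum>l\<in>UNIV. pd k (\<lambda>y. ginv g y k l) x * pd l u x)
      = - (\<Sum>a\<in>UNIV. ginv g x k a * (\<Sum>b\<in>UNIV. pd k (\<lambda>y. g y $ a $ b) x * grad g u b x))" for k
  proof -
    have "(\<Sum>l\<in>UNIV. pd k (\<lambda>y. ginv g y k l) x * pd l u x)
        = - (\<Sum>l\<in>UNIV. \<Sum>a\<in>UNIV. \<Sum>b\<in>UNIV.
               ginv g x k a * (pd k (\<lambda>y. g y $ a $ b) x * (ginv g x b l * pd l u x)))"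
      unfolding pd_ginv[OF x] by (simp add: sum_distrib_left sum_distrib_right sum_negf mult.assoc)
    also have "\<dots> = - (\<Sum>a\<in>UNIV. \<Sum>b\<in>UNIV. \<Sum>l\<in>UNIV.
               ginv g x k a * (pd k (\<lambda>y. g y $ a $ b) x * (ginv g x b l * pd l u x)))"
      by (subst sum_rotate3) (rule refl)
    finally show ?thesis
      unfolding grad_def by (simp add: sum_distrib_left)
  qed
  ultimately show ?thesis by (simp add: sum.distrib sum_subtractf)
qed

text \<open>The terms \<open>g\<^sup>k\<^sup>a \<partial>\<^sub>k g\<^sub>a\<^sub>b \<nabla>\<^sup>b u\<close> of the two previous lemmas cancel.\<close>
lemma divergence_grad:
  assumes "smooth_on U u" "x \<in> U"
  shows "(\<Sum>k\<in>UNIV. pd k (grad g u k) x) + (\<Sum>a\<in>UNIV. christ_trace g a x * grad g u a x) = lap g u x"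
  unfolding sum_pd_grad[OF assms] lap_def hess_eq_christ_pd
  using trace_christ_pd[OF assms(2), of u]
  by (simp add: right_diff_distrib sum_subtractf)

end

section \<open>Conformal change of the metric\<close>

definition conformal_metric ::
    "(real^'n::finite \<Rightarrow> real) \<Rightarrow> (real^'n \<Rightarrow> real^'n^'n) \<Rightarrow> real^'n \<Rightarrow> real^'n^'n" where
  "conformal_metric \<phi> g x = exp (2 * \<phi> x) *\<^sub>R g x"

locale conformal_chart = riemannian_chart +
  fixes \<phi> :: "real^'n \<Rightarrow> real"
  assumes smooth_phi: "smooth_on U \<phi>"
begin

definition christ_change :: "'n \<Rightarrow> 'n \<Rightarrow> 'n \<Rightarrow> real^'n \<Rightarrow> real" where
  "christ_change k i j y = (if k = j then pd i \<phi> y else 0) + (if k = i then pd j \<phi> y else 0)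
    - g y $ i $ j * grad g \<phi> k y"

lemma ginv_conformal: "x \<in> U \<Longrightarrow> ginv (conformal_metric \<phi> g) x k l = exp (- 2 * \<phi> x) * ginv g x k l"
  unfolding ginv_def conformal_metric_def
  by (simp add: matrix_inv_scaleR invertible_g exp_minus)

lemma pd_conformal_metric:
  assumes x: "x \<in> U"
  shows "pd l (\<lambda>y. conformal_metric \<phi> g y $ i $ j) x =
    exp (2 * \<phi> x) * (2 * pd l \<phi> x * g x $ i $ j + pd l (\<lambda>y. g y $ i $ j) x)"
proof -
  have d\<phi>: "(\<lambda>y. 2 * \<phi> y) differentiable (at x)"
    using smooth_on_differentiable[OF smooth_phi x] by simp
  have "pd l (\<lambda>y. conformal_metric \<phi> g y $ i $ j) x = pd l (\<lambda>y. exp (2 * \<phi> y) * g y $ i $ j) x"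
    by (simp add: conformal_metric_def)
  also have "\<dots> = exp (2 * \<phi> x) * (2 * pd l \<phi> x) * g x $ i $ j + exp (2 * \<phi> x) * pd l (\<lambda>y. g y $ i $ j) x"
    using differentiable_exp_comp[OF d\<phi>] g_differentiable[OF x]
      pd_exp[OF d\<phi>] pd_cmult[OF smooth_on_differentiable[OF smooth_phi x]]
    by (simp add: pd_mult)
  finally show ?thesis by (simp add: algebra_simps)
qed

lemma christ_conformal:
  assumes x: "x \<in> U"
  shows "christ (conformal_metric \<phi> g) k i j x = christ g k i j x + christ_change k i j x"
proof -
  have "christ (conformal_metric \<phi> g) k i j x = (1/2) * (\<Sum>l\<in>UNIV. ginv g x k l *
      (pd i (\<lambda>y. g y $ j $ l) x + pd j (\<lambda>y. g y $ i $ l) x - pd l (\<lambda>y. g y $ i $ j) x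
       + 2 * (pd i \<phi> x * g x $ j $ l + pd j \<phi> x * g x $ i $ l - pd l \<phi> x * g x $ i $ j)))"
    unfolding christ_def
  proof (intro arg_cong[where f="\<lambda>z. (1/2) * z"] sum.cong refl)
    fix l
    let ?C = "pd i (\<lambda>y. g y $ j $ l) x + pd j (\<lambda>y. g y $ i $ l) x - pd l (\<lambda>y. g y $ i $ j) x
        + 2 * (pd i \<phi> x * g x $ j $ l + pd j \<phi> x * g x $ i $ l - pd l \<phi> x * g x $ i $ j)"
    have "ginv (conformal_metric \<phi> g) x k l * (pd i (\<lambda>y. conformal_metric \<phi> g y $ j $ l) x
        + pd j (\<lambda>y. conformal_metric \<phi> g y $ i $ l) x - pd l (\<lambda>y. conformal_metric \<phi> g y $ i $ j) x)
      = (exp (- 2 * \<phi> x) * exp (2 * \<phi> x)) * (ginv g x k l * ?C)"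
      unfolding ginv_conformal[OF x] pd_conformal_metric[OF x]
      by (simp add: g_sym[OF x, of j i] algebra_simps)
    also have "exp (- 2 * \<phi> x) * exp (2 * \<phi> x) = 1"
      by (simp add: exp_add[symmetric])
    finally show "ginv (conformal_metric \<phi> g) x k l * (pd i (\<lambda>y. conformal_metric \<phi> g y $ j $ l) x
        + pd j (\<lambda>y. conformal_metric \<phi> g y $ i $ l) x - pd l (\<lambda>y. conformal_metric \<phi> g y $ i $ j) x)
      = ginv g x k l * ?C"
      by simp
  qed
  also have "\<dots> = christ g k i j x + (pd i \<phi> x * (\<Sum>l\<in>UNIV. ginv g x k l * g x $ j $ l)
       + pd j \<phi> x * (\<Sum>l\<in>UNIV. ginv g x k l * g x $ i $ l) - g x $ i $ j * grad g \<phi> k x)"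
    unfolding christ_def grad_def
    by (simp add: distrib_left sum.distrib sum_subtractf sum_distrib_left algebra_simps)
  also have "\<dots> = christ g k i j x + christ_change k i j x"
  proof -
    have "(\<Sum>l\<in>UNIV. ginv g x k l * g x $ m $ l) = (if k = m then 1 else 0)" for m
      using ginv_mult_g[OF x, of k m] by (simp add: g_sym[OF x, of _ m])
    then show ?thesis unfolding christ_change_def by simp
  qed
  finally show ?thesis .
qed

lemma sum_mult_christ_change:
  "(\<Sum>k\<in>UNIV. X k * christ_change k i j x)
    = X j * pd i \<phi> x + X i * pd j \<phi> x - g x $ i $ j * (\<Sum>k\<in>UNIV. X k * grad g \<phi> k x)"
  unfolding christ_change_def
  by (simp add: ring_distribs sum.distrib sum_subtractf sum_distrib_left algebra_simps)

lemma trace_christ_change: "x \<in> U \<Longrightarrow> (\<Sum>k\<in>UNIV. christ_change k k i x) = real CARD('n) * pd i \<phi> x"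
  unfolding christ_change_def
  by (simp add: sum.distrib sum_subtractf g_sym[of x _ i] g_mult_grad)

lemma sum_grad_mult_christ_change:
  assumes x: "x \<in> U"
  shows "(\<Sum>k\<in>UNIV. grad g \<phi> k x * christ_change l k i x) = (if l = i then gip g \<phi> \<phi> x else 0)"
proof -
  have "(\<Sum>k\<in>UNIV. grad g \<phi> k x * christ_change l k i x)
      = (\<Sum>k\<in>UNIV. if l = i then grad g \<phi> k x * pd k \<phi> x else 0) + grad g \<phi> l x * pd i \<phi> x
        - grad g \<phi> l x * (\<Sum>k\<in>UNIV. g x $ i $ k * grad g \<phi> k x)"
    unfolding christ_change_def
    by (simp add: ring_distribs sum.distrib sum_subtractf sum_distrib_left g_sym[OF x, of _ i]
        mult_ac)
  also have "\<dots> = (if l = i then gip g \<phi> \<phi> x else 0)"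
    by (cases "l = i") (simp_all add: g_mult_grad[OF x] sum_grad_mult_pd)
  finally show ?thesis .
qed

lemma hess_conformal:
  assumes x: "x \<in> U"
  shows "hess (conformal_metric \<phi> g) u i j x
    = hess g u i j x - pd i \<phi> x * pd j u x - pd j \<phi> x * pd i u x + g x $ i $ j * gip g u \<phi> x"
proof -
  have "hess (conformal_metric \<phi> g) u i j x = hess g u i j x - (\<Sum>k\<in>UNIV. pd k u x * christ_change k i j x)"
    unfolding hess_def christ_conformal[OF x] by (simp add: ring_distribs sum.distrib algebra_simps)
  then show ?thesis
    unfolding sum_mult_christ_change using sum_grad_mult_pd[of g \<phi> x u] by (simp add: mult.commute)
qed

lemma lap_conformal:
  assumes x: "x \<in> U"
  shows "lap (conformal_metric \<phi> g) u x
    = exp (- 2 * \<phi> x) * (lap g u x + (real CARD('n) - 2) * gip g u \<phi> x)"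
proof -
  have "lap (conformal_metric \<phi> g) u x = exp (- 2 * \<phi> x) * (\<Sum>i\<in>UNIV. \<Sum>j\<in>UNIV. ginv g x i j *
     (hess g u i j x - pd i \<phi> x * pd j u x - pd j \<phi> x * pd i u x + g x $ i $ j * gip g u \<phi> x))"
    unfolding lap_def by (simp add: hess_conformal[OF x] ginv_conformal[OF x] sum_distrib_left mult.assoc)
  also have "(\<Sum>i\<in>UNIV. \<Sum>j\<in>UNIV. ginv g x i j *
     (hess g u i j x - pd i \<phi> x * pd j u x - pd j \<phi> x * pd i u x + g x $ i $ j * gip g u \<phi> x))
     = lap g u x - gip g \<phi> u x - gip g u \<phi> x
       + (\<Sum>i\<in>UNIV. \<Sum>j\<in>UNIV. ginv g x i j * g x $ i $ j) * gip g u \<phi> x"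
    unfolding lap_def gip_def
    by (simp add: ring_distribs sum.distrib sum_subtractf sum_distrib_right algebra_simps)
  finally show ?thesis
    unfolding trace_ginv_g[OF x] gip_sym[OF x, of \<phi> u] by (simp add: algebra_simps)
qed

lemma christ_change_differentiable: "x \<in> U \<Longrightarrow> christ_change k i j differentiable (at x)"
  unfolding christ_change_def[abs_def]
  by (intro differentiable_add differentiable_diff differentiable_mult differentiable_if_zero
      smooth_on_pd_differentiable[OF smooth_phi] g_differentiable grad_differentiable[OF smooth_phi])

lemma pd_christ_conformal:
  assumes x: "x \<in> U"
  shows "pd l (christ (conformal_metric \<phi> g) k i j) x = pd l (christ g k i j) x + pd l (christ_change k i j) x"
proof -
  have "pd l (christ (conformal_metric \<phi> g) k i j) x = pd l (\<lambda>y. christ g k i j y + christ_change k i j y) x"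
    by (rule pd_cong[OF open_U x]) (simp add: christ_conformal)
  also have "\<dots> = pd l (christ g k i j) x + pd l (christ_change k i j) x"
    by (rule pd_add) (use x christ_differentiable christ_change_differentiable in auto)
  finally show ?thesis .
qed

lemma pd_christ_change:
  assumes x: "x \<in> U"
  shows "pd l (christ_change k i j) x = (if k = j then pd l (pd i \<phi>) x else 0)
    + (if k = i then pd l (pd j \<phi>) x else 0)
    - (pd l (\<lambda>y. g y $ i $ j) x * grad g \<phi> k x + g x $ i $ j * pd l (grad g \<phi> k) x)"
proof -
  have d1: "(\<lambda>y. if k = j then pd i \<phi> y else 0) differentiable (at x)"
    and d2: "(\<lambda>y. if k = i then pd j \<phi> y else 0) differentiable (at x)"
    by (intro differentiable_if_zero smooth_on_pd_differentiable[OF smooth_phi x])+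
  have d3: "(\<lambda>y. g y $ i $ j * grad g \<phi> k y) differentiable (at x)"
    by (intro differentiable_mult g_differentiable grad_differentiable[OF smooth_phi] x)
  show ?thesis unfolding christ_change_def[abs_def]
    by (simp add: pd_diff[OF differentiable_add[OF d1 d2] d3] pd_add[OF d1 d2]
        pd_mult[OF g_differentiable[OF x] grad_differentiable[OF smooth_phi x]] pd_if)
qed

lemma ricci_change_derivative_terms:
  assumes x: "x \<in> U"
  shows "(\<Sum>k\<in>UNIV. pd k (christ_change k i j) x) - (\<Sum>k\<in>UNIV. pd j (christ_change k k i) x)
    = - (real CARD('n) - 2) * pd i (pd j \<phi>) x - (\<Sum>l\<in>UNIV. grad g \<phi> l x * pd l (\<lambda>y. g y $ i $ j) x)
      - g x $ i $ j * (lap g \<phi> x - (\<Sum>a\<in>UNIV. christ_trace g a x * grad g \<phi> a x))"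
proof -
  have "(\<Sum>k\<in>UNIV. pd k (christ_change k i j) x) = pd j (pd i \<phi>) x + pd i (pd j \<phi>) x
      - (\<Sum>l\<in>UNIV. grad g \<phi> l x * pd l (\<lambda>y. g y $ i $ j) x)
      - g x $ i $ j * (\<Sum>k\<in>UNIV. pd k (grad g \<phi> k) x)"
    by (simp add: pd_christ_change[OF x] sum.distrib sum_subtractf sum_distrib_left mult.commute)
  moreover have "(\<Sum>k\<in>UNIV. pd j (christ_change k k i) x) = real CARD('n) * pd j (pd i \<phi>) x"
  proof -
    have "(\<Sum>k\<in>UNIV. pd j (christ_change k k i) x) = pd j (\<lambda>y. \<Sum>k\<in>UNIV. christ_change k k i y) x"
      by (rule pd_sum[symmetric]) (use x christ_change_differentiable in auto)
    also have "\<dots> = pd j (\<lambda>y. real CARD('n) * pd i \<phi> y) x"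
      by (rule pd_cong[OF open_U x]) (simp add: trace_christ_change)
    also have "\<dots> = real CARD('n) * pd j (pd i \<phi>) x"
      by (rule pd_cmult, rule smooth_on_pd_differentiable[OF smooth_phi x])
    finally show ?thesis .
  qed
  moreover have "(\<Sum>k\<in>UNIV. pd k (grad g \<phi> k) x) = lap g \<phi> x - (\<Sum>a\<in>UNIV. christ_trace g a x * grad g \<phi> a x)"
    using divergence_grad[OF smooth_phi x] by simp
  moreover have "pd j (pd i \<phi>) x = pd i (pd j \<phi>) x"
    by (rule pd_pd_commute[OF open_U x smooth_phi, symmetric])
  ultimately show ?thesis by (simp add: algebra_simps)
qed

lemma ricci_cross_terms_first:
  assumes x: "x \<in> U"
  shows "(\<Sum>k\<in>UNIV. \<Sum>l\<in>UNIV. christ g k k l x * christ_change l i j x)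
      + (\<Sum>k\<in>UNIV. \<Sum>l\<in>UNIV. christ_change k k l x * christ g l i j x)
    = christ_trace g j x * pd i \<phi> x + christ_trace g i x * pd j \<phi> x
      - g x $ i $ j * (\<Sum>l\<in>UNIV. christ_trace g l x * grad g \<phi> l x)
      + real CARD('n) * christ_pd g \<phi> i j x"
proof -
  have "(\<Sum>k\<in>UNIV. \<Sum>l\<in>UNIV. christ g k k l x * christ_change l i j x)
      = (\<Sum>l\<in>UNIV. christ_trace g l x * christ_change l i j x)"
    unfolding christ_trace_def by (subst sum.swap) (simp add: sum_distrib_right)
  moreover have "(\<Sum>k\<in>UNIV. \<Sum>l\<in>UNIV. christ_change k k l x * christ g l i j x)
      = (\<Sum>l\<in>UNIV. (\<Sum>k\<in>UNIV. christ_change k k l x) * christ g l i j x)"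
    by (subst sum.swap) (simp add: sum_distrib_right)
  ultimately show ?thesis
    unfolding sum_mult_christ_change christ_pd_def
    by (simp add: trace_christ_change[OF x] sum_distrib_left algebra_simps)
qed

lemma ricci_cross_terms_second:
  assumes x: "x \<in> U"
  shows "(\<Sum>k\<in>UNIV. \<Sum>l\<in>UNIV. christ g k j l x * christ_change l k i x)
      + (\<Sum>k\<in>UNIV. \<Sum>l\<in>UNIV. christ_change k j l x * christ g l k i x)
    = 2 * christ_pd g \<phi> i j x + pd i \<phi> x * christ_trace g j x + pd j \<phi> x * christ_trace g i x
      - (\<Sum>l\<in>UNIV. grad g \<phi> l x * pd l (\<lambda>y. g y $ i $ j) x)"
proof -
  let ?P = "\<lambda>l. grad g \<phi> l x"
  have "(\<Sum>k\<in>UNIV. \<Sum>l\<in>UNIV. christ g k j l x * christ_change l k i x)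
      = (\<Sum>k\<in>UNIV. christ g k j i x * pd k \<phi> x + christ g k j k x * pd i \<phi> x
          - g x $ k $ i * (\<Sum>l\<in>UNIV. christ g k j l x * ?P l))"
    by (simp add: sum_mult_christ_change)
  then have first: "(\<Sum>k\<in>UNIV. \<Sum>l\<in>UNIV. christ g k j l x * christ_change l k i x)
      = christ_pd g \<phi> i j x + pd i \<phi> x * christ_trace g j x
        - (\<Sum>k\<in>UNIV. g x $ i $ k * (\<Sum>l\<in>UNIV. christ g k j l x * ?P l))"
    unfolding christ_pd_def christ_trace_def
    by (simp add: sum.distrib sum_subtractf sum_distrib_left christ_sym[OF x, of _ j] g_sym[OF x, of _ i]
        mult.commute)
  have "(\<Sum>k\<in>UNIV. \<Sum>l\<in>UNIV. christ_change k j l x * christ g l k i x)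
      = (\<Sum>l\<in>UNIV. \<Sum>k\<in>UNIV. christ g l k i x * christ_change k j l x)"
    by (subst sum.swap) (simp add: mult.commute)
  also have "\<dots> = (\<Sum>l\<in>UNIV. christ g l l i x * pd j \<phi> x + christ g l j i x * pd l \<phi> x
          - g x $ j $ l * (\<Sum>k\<in>UNIV. christ g l k i x * ?P k))"
    by (simp add: sum_mult_christ_change)
  finally have second: "(\<Sum>k\<in>UNIV. \<Sum>l\<in>UNIV. christ_change k j l x * christ g l k i x)
      = pd j \<phi> x * christ_trace g i x + christ_pd g \<phi> i j x
        - (\<Sum>l\<in>UNIV. g x $ j $ l * (\<Sum>k\<in>UNIV. christ g l i k x * ?P k))"
    unfolding christ_pd_def christ_trace_def
    by (simp add: sum.distrib sum_subtractf sum_distrib_left christ_sym[OF x, of _ _ i]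
        christ_sym[OF x, of _ j i] mult.commute)
  show ?thesis
    unfolding first second sum_mult_pd_g_eq_christ[OF x] by simp
qed

lemma ricci_change_quadratic_terms:
  assumes x: "x \<in> U"
  shows "(\<Sum>k\<in>UNIV. \<Sum>l\<in>UNIV. christ_change k k l x * christ_change l i j x)
      - (\<Sum>k\<in>UNIV. \<Sum>l\<in>UNIV. christ_change k j l x * christ_change l k i x)
    = (real CARD('n) - 2) * (pd i \<phi> x * pd j \<phi> x - g x $ i $ j * gip g \<phi> \<phi> x)"
proof -
  let ?n = "real CARD('n)"
  have pd_grad: "(\<Sum>l\<in>UNIV. pd l \<phi> x * grad g \<phi> l x) = gip g \<phi> \<phi> x"
    using sum_grad_mult_pd[of g \<phi> x \<phi>] by (simp add: mult.commute)
  have "(\<Sum>k\<in>UNIV. \<Sum>l\<in>UNIV. christ_change k k l x * christ_change l i j x)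
      = (\<Sum>l\<in>UNIV. (?n * pd l \<phi> x) * christ_change l i j x)"
    by (subst sum.swap) (simp add: sum_distrib_right[symmetric] trace_christ_change[OF x])
  also have "\<dots> = ?n * (2 * pd i \<phi> x * pd j \<phi> x - g x $ i $ j * gip g \<phi> \<phi> x)"
    unfolding sum_mult_christ_change by (simp add: sum_distrib_left[symmetric] mult.assoc pd_grad algebra_simps)
  finally have c: "(\<Sum>k\<in>UNIV. \<Sum>l\<in>UNIV. christ_change k k l x * christ_change l i j x) = \<dots>" .
  have "(\<Sum>k\<in>UNIV. \<Sum>l\<in>UNIV. christ_change k j l x * christ_change l k i x)
      = (\<Sum>l\<in>UNIV. \<Sum>k\<in>UNIV. christ_change l k i x * christ_change k j l x)"
    by (subst sum.swap) (simp add: mult.commute)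
  also have "\<dots> = (\<Sum>l\<in>UNIV. christ_change l l i x * pd j \<phi> x + pd l \<phi> x * christ_change l j i x
          - g x $ j $ l * (\<Sum>k\<in>UNIV. grad g \<phi> k x * christ_change l k i x))"
    by (simp add: sum_mult_christ_change mult.commute)
  also have "\<dots> = ?n * pd i \<phi> x * pd j \<phi> x + (2 * pd i \<phi> x * pd j \<phi> x - g x $ i $ j * gip g \<phi> \<phi> x)
          - g x $ i $ j * gip g \<phi> \<phi> x"
  proof -
    have "(\<Sum>l\<in>UNIV. christ_change l l i x * pd j \<phi> x) = ?n * pd i \<phi> x * pd j \<phi> x"
      by (simp add: sum_distrib_right[symmetric] trace_christ_change[OF x])
    then show ?thesis
      unfolding sum.distrib sum_subtractf sum_grad_mult_christ_change[OF x]
      by (simp add: sum_mult_christ_change pd_grad g_sym[OF x, of j i] algebra_simps)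
  qed
  finally show ?thesis using c by (simp add: algebra_simps)
qed

lemma ricci_conformal:
  assumes x: "x \<in> U"
  shows "ricci (conformal_metric \<phi> g) i j x = ricci g i j x
    - (real CARD('n) - 2) * (hess g \<phi> i j x - pd i \<phi> x * pd j \<phi> x)
    - (lap g \<phi> x + (real CARD('n) - 2) * gip g \<phi> \<phi> x) * g x $ i $ j"
proof -
  let ?G = "\<lambda>k i j. christ g k i j x" and ?D = "\<lambda>k i j. christ_change k i j x"
  have expand: "(?G k k l + ?D k k l) * (?G l i j + ?D l i j) - (?G k j l + ?D k j l) * (?G l k i + ?D l k i)
      = (?G k k l * ?G l i j - ?G k j l * ?G l k i) + (?G k k l * ?D l i j + ?D k k l * ?G l i j)
        - (?G k j l * ?D l k i + ?D k j l * ?G l k i) + (?D k k l * ?D l i j - ?D k j l * ?D l k i)" for k l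
    by (simp add: algebra_simps)
  have "ricci (conformal_metric \<phi> g) i j x = ricci g i j x
      + ((\<Sum>k\<in>UNIV. pd k (christ_change k i j) x) - (\<Sum>k\<in>UNIV. pd j (christ_change k k i) x))
      + ((\<Sum>k\<in>UNIV. \<Sum>l\<in>UNIV. ?G k k l * ?D l i j) + (\<Sum>k\<in>UNIV. \<Sum>l\<in>UNIV. ?D k k l * ?G l i j))
      - ((\<Sum>k\<in>UNIV. \<Sum>l\<in>UNIV. ?G k j l * ?D l k i) + (\<Sum>k\<in>UNIV. \<Sum>l\<in>UNIV. ?D k j l * ?G l k i))
      + ((\<Sum>k\<in>UNIV. \<Sum>l\<in>UNIV. ?D k k l * ?D l i j) - (\<Sum>k\<in>UNIV. \<Sum>l\<in>UNIV. ?D k j l * ?D l k i))"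
    unfolding ricci_def christ_conformal[OF x] pd_christ_conformal[OF x] expand sum.distrib sum_subtractf
    by (simp add: algebra_simps)
  also have "\<dots> = ricci g i j x
      - (real CARD('n) - 2) * (pd i (pd j \<phi>) x - christ_pd g \<phi> i j x - pd i \<phi> x * pd j \<phi> x)
      - (lap g \<phi> x + (real CARD('n) - 2) * gip g \<phi> \<phi> x) * g x $ i $ j"
    unfolding ricci_change_derivative_terms[OF x] ricci_cross_terms_first[OF x]
      ricci_cross_terms_second[OF x] ricci_change_quadratic_terms[OF x]
    by (simp add: algebra_simps)
  finally show ?thesis by (simp add: hess_eq_christ_pd)
qed

lemma pd_exp_mult:
  assumes V: "smooth_on U V" and x: "x \<in> U"
  shows "pd j (\<lambda>y. exp (\<phi> y) * V y) x = exp (\<phi> x) * (pd j \<phi> x * V x + pd j V x)"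
  using pd_mult[OF differentiable_exp_comp smooth_on_differentiable[OF V x], of \<phi> j]
    pd_exp[of \<phi> x j] smooth_on_differentiable[OF smooth_phi x]
  by (simp add: algebra_simps)

lemma pd_pd_exp_mult:
  assumes V: "smooth_on U V" and x: "x \<in> U"
  shows "pd i (pd j (\<lambda>y. exp (\<phi> y) * V y)) x = exp (\<phi> x) * (pd i \<phi> x * (pd j \<phi> x * V x + pd j V x)
    + pd i (pd j \<phi>) x * V x + pd j \<phi> x * pd i V x + pd i (pd j V) x)"
proof -
  have d\<phi>: "\<phi> differentiable (at x)" "pd j \<phi> differentiable (at x)"
    and dV: "V differentiable (at x)" "pd j V differentiable (at x)"
    using smooth_phi V x smooth_on_differentiable smooth_on_pd_differentiable by blast+
  have "pd i (pd j (\<lambda>y. exp (\<phi> y) * V y)) x = pd i (\<lambda>y. exp (\<phi> y) * (pd j \<phi> y * V y + pd j V y)) x"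
    by (rule pd_cong[OF open_U x]) (simp add: pd_exp_mult[OF V])
  also have "\<dots> = exp (\<phi> x) * pd i \<phi> x * (pd j \<phi> x * V x + pd j V x)
      + exp (\<phi> x) * (pd i (pd j \<phi>) x * V x + pd j \<phi> x * pd i V x + pd i (pd j V) x)"
    using d\<phi> dV differentiable_exp_comp[OF d\<phi>(1)]
    by (simp add: pd_mult pd_add pd_exp differentiable_mult)
  finally show ?thesis by (simp add: algebra_simps)
qed

lemma hess_exp_mult:
  assumes V: "smooth_on U V" and x: "x \<in> U"
  shows "hess g (\<lambda>y. exp (\<phi> y) * V y) i j x = exp (\<phi> x) * (hess g V i j x + V x * hess g \<phi> i j x
    + V x * pd i \<phi> x * pd j \<phi> x + pd i \<phi> x * pd j V x + pd j \<phi> x * pd i V x)"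
  unfolding hess_def pd_pd_exp_mult[OF V x] pd_exp_mult[OF V x]
  by (simp add: ring_distribs sum.distrib sum_distrib_left sum_subtractf algebra_simps)

lemma lap_exp_mult:
  assumes V: "smooth_on U V" and x: "x \<in> U"
  shows "lap g (\<lambda>y. exp (\<phi> y) * V y) x
    = exp (\<phi> x) * (lap g V x + V x * lap g \<phi> x + V x * gip g \<phi> \<phi> x + 2 * gip g V \<phi> x)"
proof -
  have "lap g (\<lambda>y. exp (\<phi> y) * V y) x = exp (\<phi> x) * (lap g V x + V x * lap g \<phi> x
      + V x * gip g \<phi> \<phi> x + gip g \<phi> V x + gip g V \<phi> x)"
    unfolding lap_def hess_exp_mult[OF V x] gip_def
    by (simp add: ring_distribs sum.distrib sum_distrib_left algebra_simps)
  then show ?thesis using gip_sym[OF x, of V \<phi>] by simp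
qed

lemma gip_exp_mult:
  assumes V: "smooth_on U V" and x: "x \<in> U"
  shows "gip g (\<lambda>y. exp (\<phi> y) * V y) \<phi> x = exp (\<phi> x) * (V x * gip g \<phi> \<phi> x + gip g V \<phi> x)"
  unfolding gip_def pd_exp_mult[OF V x]
  by (simp add: ring_distribs sum.distrib sum_distrib_left algebra_simps)

lemma lap_conformal_exp_mult:
  assumes V: "smooth_on U V" and x: "x \<in> U"
  shows "lap (conformal_metric \<phi> g) (\<lambda>y. exp (\<phi> y) * V y) x = exp (- \<phi> x) * (lap g V x
    + V x * lap g \<phi> x + (real CARD('n) - 1) * V x * gip g \<phi> \<phi> x + real CARD('n) * gip g V \<phi> x)"
proof -
  have "lap (conformal_metric \<phi> g) (\<lambda>y. exp (\<phi> y) * V y) x = exp (- 2 * \<phi> x) * exp (\<phi> x) *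
      (lap g V x + V x * lap g \<phi> x + V x * gip g \<phi> \<phi> x + 2 * gip g V \<phi> x
       + (real CARD('n) - 2) * (V x * gip g \<phi> \<phi> x + gip g V \<phi> x))"
    unfolding lap_conformal[OF x] lap_exp_mult[OF V x] gip_exp_mult[OF V x]
    by (simp add: algebra_simps)
  also have "exp (- 2 * \<phi> x) * exp (\<phi> x) = exp (- \<phi> x)"
    by (simp add: exp_add[symmetric])
  finally show ?thesis by (simp add: algebra_simps)
qed

lemma hess_conformal_exp_mult_sub_ricci:
  assumes V: "smooth_on U V" and x: "x \<in> U"
  shows "hess (conformal_metric \<phi> g) (\<lambda>y. exp (\<phi> y) * V y) i j x
      - exp (\<phi> x) * V x * ricci (conformal_metric \<phi> g) i j x
    = exp (\<phi> x) * (hess g V i j x - V x * ricci g i j x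
      + (real CARD('n) - 1) * V x * (hess g \<phi> i j x - pd i \<phi> x * pd j \<phi> x)
      + (gip g V \<phi> x + V x * lap g \<phi> x + (real CARD('n) - 1) * V x * gip g \<phi> \<phi> x) * g x $ i $ j)"
  unfolding hess_conformal[OF x] hess_exp_mult[OF V x] gip_exp_mult[OF V x] ricci_conformal[OF x]
    pd_exp_mult[OF V x]
  by (simp add: algebra_simps)

end

lemma half_Fstar_f_add_Sf:
  "(1/2) * Fstar_f g f V x + (1/2) * V x * Sf g f x
    = lap g V x - real CARD('n) / (real CARD('n) - 1) * gip g V f x
      - V x * lap g f x / (real CARD('n) - 1) + V x * gip g f f x / (real CARD('n) - 1)"
  for g :: "real^'n::finite \<Rightarrow> real^'n^'n"
  unfolding Fstar_f_def by (simp add: algebra_simps)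

lemma Fstar_g_add_half_Fstar_f:
  "Fstar_g g f V i j x + (1/2) * Fstar_f g f V x * g x $ i $ j
    = hess g V i j x - V x * (ricci g i j x + hess g f i j x + pd i f x * pd j f x / (real CARD('n) - 1))
      + (gip g V f x - real CARD('n) / (real CARD('n) - 1) * gip g V f x
         - V x * lap g f x / (real CARD('n) - 1) + V x * gip g f f x / (real CARD('n) - 1)) * g x $ i $ j"
  for g :: "real^'n::finite \<Rightarrow> real^'n^'n"
  unfolding Fstar_g_def Fstar_f_def by (simp add: algebra_simps)

lemma minus_reciprocal_coefficients:
  fixes c n :: real
  assumes c: "c = - 1 / (n - 1)" and n: "n \<noteq> 1"
  shows "A + W * (c * B) + (n - 1) * W * (c * c * G) + n * (c * H)
      = A - n / (n - 1) * H - W * B / (n - 1) + W * G / (n - 1)"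
    and "A - W * R + (n - 1) * W * (c * B - c * a * (c * b))
        + (c * H + W * (c * L) + (n - 1) * W * (c * c * G)) * \<gamma>
      = A - W * (R + B + a * b / (n - 1))
        + (H - n / (n - 1) * H - W * L / (n - 1) + W * G / (n - 1)) * \<gamma>"
proof -
  have "(n - 1) * inverse (n - 1) = 1" using n by simp
  then show "A + W * (c * B) + (n - 1) * W * (c * c * G) + n * (c * H)
      = A - n / (n - 1) * H - W * B / (n - 1) + W * G / (n - 1)"
    and "A - W * R + (n - 1) * W * (c * B - c * a * (c * b))
        + (c * H + W * (c * L) + (n - 1) * W * (c * c * G)) * \<gamma>
      = A - W * (R + B + a * b / (n - 1))
        + (H - n / (n - 1) * H - W * L / (n - 1) + W * G / (n - 1)) * \<gamma>"
    unfolding c divide_inverse by algebra+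
qed

theorem lemma3p2:
  fixes U :: "(real^'n::finite) set"
    and g :: "real^'n \<Rightarrow> real^'n^'n"
    and f V :: "real^'n \<Rightarrow> real"
  assumes "CARD('n) \<ge> 3"
    and "open U"
    and "riem_metric_on U g"
    and "smooth_on U f" and "smooth_on U V"
  defines "gt \<equiv> (\<lambda>x. exp (- 2 / (real CARD('n) - 1) * f x) *\<^sub>R g x)"
    and "u \<equiv> (\<lambda>x. exp (- f x / (real CARD('n) - 1)) * V x)"
  shows "\<forall>x\<in>U.
      lap gt u x = exp (f x / (real CARD('n) - 1)) *
          ((1/2) * Fstar_f g f V x + (1/2) * V x * Sf g f x)
    \<and> (\<forall>i j. hess gt u i j x - u x * ricci gt i j x =
          exp (- f x / (real CARD('n) - 1)) *
          (Fstar_g g f V i j x + (1/2) * Fstar_f g f V x * g x $ i $ j))"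
proof
  fix x assume x: "x \<in> U"
  define c where "c = - 1 / (real CARD('n) - 1)"
  define \<phi> where "\<phi> = (\<lambda>y. c * f y)"
  have n: "real CARD('n) \<noteq> 1" using assms(1) by simp
  interpret conformal_chart U g \<phi>
    by unfold_locales (use assms(2-4) smooth_on_cmult in \<open>auto simp: \<phi>_def\<close>)
  have gt_eq: "gt = conformal_metric \<phi> g" and u_eq: "u = (\<lambda>y. exp (\<phi> y) * V y)"
    unfolding gt_def u_def conformal_metric_def \<phi>_def c_def by (simp_all add: fun_eq_iff)
  have \<phi>_derivs: "pd i \<phi> x = c * pd i f x" "hess g \<phi> i j x = c * hess g f i j x"
      "lap g \<phi> x = c * lap g f x" "gip g \<phi> \<phi> x = c * c * gip g f f x" "gip g V \<phi> x = c * gip g V f x"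
    for i j
    unfolding \<phi>_def
    using pd_cmult[OF smooth_on_differentiable[OF assms(4) x]] hess_cmult[OF assms(2,4) x]
      lap_cmult[OF assms(2,4) x] gip_cmult[OF assms(4) x]
    by simp_all
  have exp_\<phi>: "exp (- \<phi> x) = exp (f x / (real CARD('n) - 1))" "exp (\<phi> x) = exp (- f x / (real CARD('n) - 1))"
    unfolding \<phi>_def c_def by simp_all
  show "lap gt u x = exp (f x / (real CARD('n) - 1)) * ((1/2) * Fstar_f g f V x + (1/2) * V x * Sf g f x)
    \<and> (\<forall>i j. hess gt u i j x - u x * ricci gt i j x =
          exp (- f x / (real CARD('n) - 1)) * (Fstar_g g f V i j x + (1/2) * Fstar_f g f V x * g x $ i $ j))"
    unfolding gt_eq u_eq lap_conformal_exp_mult[OF assms(5) x] hess_conformal_exp_mult_sub_ricci[OF assms(5) x]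
    unfolding half_Fstar_f_add_Sf Fstar_g_add_half_Fstar_f \<phi>_derivs exp_\<phi>
      minus_reciprocal_coefficients[OF c_def n]
    by simp
qed

end
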